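(* For every $n\ge1$, the parity function $\Pi:\{0,1\}^n\to\{0,1\}$ ($\Pi(x)=1$ iff $\sum_{j=1}^n x_j$ is odd) has a $y$-linear quadratization involving $\lfloor n/2\rfloor$ auxiliary variables, and its complement $\overline{\Pi}=1-\Pi$ has a $y$-linear quadratization involving $\lfloor (n-1)/2\rfloor$ auxiliary variables.
   Context: A quadratization of $f:\{0,1\}^n\to\mathbb{R}$ using $m$ auxiliary variables is a polynomial $g(x,y)$ of degree at most $2$ in $x_1,\ldots,x_n,y_1,\ldots,y_m$ such that $f(x)=\min\{g(x,y):y\in\{0,1\}^m\}$ for all $x\in\{0,1\}^n$. It is $y$-linear if it contains no product of two auxiliary variables, i.e. $g(x,y)=q(x)+\sum_{i=1}^m a_i(x)y_i$ with $q$ quadratic and each $a_i$ affine in $x$. *)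

theory Defs
  imports Complex_Main
begin

definition bool_cube :: "nat \<Rightarrow> (nat \<Rightarrow> real) set" where
  "bool_cube n = {x. (\<forall>j<n. x j \<in> {0, 1}) \<and> (\<forall>j\<ge>n. x j = 0)}"

definition quad_poly :: "nat \<Rightarrow> real \<Rightarrow> (nat \<Rightarrow> real) \<Rightarrow> (nat \<Rightarrow> nat \<Rightarrow> real) \<Rightarrow> (nat \<Rightarrow> real) \<Rightarrow> real" where
  "quad_poly n c b C x = c + (\<Sum>j<n. b j * x j) + (\<Sum>j<n. \<Sum>k<n. C j k * x j * x k)"

definition affine_poly :: "nat \<Rightarrow> real \<Rightarrow> (nat \<Rightarrow> real) \<Rightarrow> (nat \<Rightarrow> real) \<Rightarrow> real" where
  "affine_poly n a0 a x = a0 + (\<Sum>j<n. a j * x j)"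

definition ylinear_quadratization :: "nat \<Rightarrow> nat \<Rightarrow> ((nat \<Rightarrow> real) \<Rightarrow> real) \<Rightarrow> bool" where
  "ylinear_quadratization n m f \<longleftrightarrow>
     (\<exists>c b C a0 a.
        (\<forall>x\<in>bool_cube n.
           let g = (\<lambda>y. quad_poly n c b C x + (\<Sum>i<m. affine_poly n (a0 i) (a i) x * y i))
           in (\<forall>y\<in>bool_cube m. f x \<le> g y) \<and> (\<exists>y\<in>bool_cube m. g y = f x)))"

definition parity :: "nat \<Rightarrow> (nat \<Rightarrow> real) \<Rightarrow> real" where
  "parity n x = (if odd (card {j. j < n \<and> x j = 1}) then 1 else 0)"

end

theory Submission
  imports Defs
begin

(*
  Both functions are symmetric, i.e. they depend only on the Hamming weight
  s = x_1 + ... + x_n.  We look for quadratizations of the symmetric shape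

      g(x,y) = c + b s + s^2 + \<Sum>_{i<m} (U_i + V s) y_i ,

  whose minimum over y is  c + b s + s^2 + \<Sum>_{i<m} min(0, U_i + V s)  (set y_i = 1
  exactly when its coefficient is negative).  For the parity we take
  U_i = 4(2i+1), V = -4 with m = \<lfloor>n/2\<rfloor>; for its complement we shift s by one and take
  U_i = 4(2i+2), V = -4 with m = \<lfloor>(n-1)/2\<rfloor>.  Both cases reduce to one identity:
  for an integer t \<ge> -1 and enough terms,  t^2 + \<Sum>_i min(0, 4(2i+1) - 4t) = t mod 2,
  because exactly the first k = \<lfloor>t/2\<rfloor> terms are negative and their sum is
  4k^2 - 4kt, so the left side equals (t - 2k)^2.
*)

definition hamming_weight :: "nat \<Rightarrow> (nat \<Rightarrow> real) \<Rightarrow> nat" where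
  "hamming_weight n x = card {j. j < n \<and> x j = 1}"

lemma hamming_weight_le: "hamming_weight n x \<le> n"
proof -
  have "card {j. j < n \<and> x j = 1} \<le> card {..<n}" by (rule card_mono) auto
  then show ?thesis by (simp add: hamming_weight_def)
qed

text \<open>On the cube the coordinate sum is the Hamming weight; this turns every
  polynomial with constant coefficients into a polynomial in the weight.\<close>
lemma sum_cube_eq_hamming_weight:
  assumes "x \<in> bool_cube n"
  shows "(\<Sum>j<n. x j) = real (hamming_weight n x)"
proof -
  have "(\<Sum>j<n. x j) = (\<Sum>j<n. if x j = 1 then 1 else 0)"
    using assms by (intro sum.cong) (auto simp: bool_cube_def)
  also have "\<dots> = real (card ({..<n} \<inter> {j. x j = 1}))"
    by (simp add: sum.If_cases)
  also have "{..<n} \<inter> {j. x j = 1} = {j. j < n \<and> x j = 1}" by auto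
  finally show ?thesis by (simp add: hamming_weight_def)
qed

lemma min_linear_form_on_cube:
  fixes L :: "nat \<Rightarrow> real"
  shows "\<forall>y\<in>bool_cube m. (\<Sum>i<m. min 0 (L i)) \<le> (\<Sum>i<m. L i * y i)"
    and "\<exists>y\<in>bool_cube m. (\<Sum>i<m. L i * y i) = (\<Sum>i<m. min 0 (L i))"
proof -
  show "\<forall>y\<in>bool_cube m. (\<Sum>i<m. min 0 (L i)) \<le> (\<Sum>i<m. L i * y i)"
  proof
    fix y assume "y \<in> bool_cube m"
    then have "\<And>i. i < m \<Longrightarrow> y i = 0 \<or> y i = 1" by (auto simp: bool_cube_def)
    then show "(\<Sum>i<m. min 0 (L i)) \<le> (\<Sum>i<m. L i * y i)"
      by (intro sum_mono) force
  qed
  define y where "y = (\<lambda>i. if i < m \<and> L i < 0 then (1::real) else 0)"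
  have "y \<in> bool_cube m" by (auto simp: bool_cube_def y_def)
  moreover have "(\<Sum>i<m. L i * y i) = (\<Sum>i<m. min 0 (L i))"
    by (rule sum.cong) (auto simp: y_def)
  ultimately show "\<exists>y\<in>bool_cube m. (\<Sum>i<m. L i * y i) = (\<Sum>i<m. min 0 (L i))" by blast
qed

lemma symmetric_ylinear_quadratization:
  fixes c b V :: real and U :: "nat \<Rightarrow> real"
  assumes f: "\<And>x. x \<in> bool_cube n \<Longrightarrow>
      f x = c + b * real (hamming_weight n x) + (real (hamming_weight n x))\<^sup>2
            + (\<Sum>i<m. min 0 (U i + V * real (hamming_weight n x)))"
  shows "ylinear_quadratization n m f"
  unfolding ylinear_quadratization_def
proof (intro exI ballI)
  fix x assume x: "x \<in> bool_cube n"
  define s where "s = real (hamming_weight n x)"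
  have weight: "(\<Sum>j<n. x j) = s"
    using sum_cube_eq_hamming_weight[OF x] by (simp add: s_def)
  have quad: "quad_poly n c (\<lambda>_. b) (\<lambda>_ _. 1) x = c + b * s + s\<^sup>2"
    unfolding quad_poly_def
    by (simp add: sum_distrib_left[symmetric] sum_distrib_right[symmetric] weight power2_eq_square)
  have aff: "\<And>i. affine_poly n (U i) (\<lambda>_. V) x = U i + V * s"
    unfolding affine_poly_def by (simp add: sum_distrib_left[symmetric] weight)
  show "let g = \<lambda>y. quad_poly n c (\<lambda>_. b) (\<lambda>_ _. 1) x + (\<Sum>i<m. affine_poly n (U i) (\<lambda>_. V) x * y i)
        in (\<forall>y\<in>bool_cube m. f x \<le> g y) \<and> (\<exists>y\<in>bool_cube m. g y = f x)"
    using min_linear_form_on_cube[of m "\<lambda>i. U i + V * s"]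
    unfolding Let_def quad aff f[OF x] s_def[symmetric] by auto
qed

text \<open>Closed form of the hinge sum: the i-th term is negative iff i < t div 2, so the
  sum runs over the first k = min m (max 0 (t div 2)) terms and equals 4k^2 - 4kt.\<close>
lemma hinge_sum:
  fixes t :: int
  shows "(\<Sum>i<m. min 0 (4 * real (2*i+1) - 4 * of_int t))
         = 4 * (of_int (min (int m) (max 0 (t div 2))))\<^sup>2 - 4 * of_int (min (int m) (max 0 (t div 2))) * of_int t"
proof (induction m)
  case 0
  then show ?case by simp
next
  case (Suc m)
  show ?case
  proof (cases "int m < t div 2")
    case True
    then have "real_of_int (2 * int m + 2) \<le> of_int t" by presburger
    then have "4 * real (2*m+1) - 4 * of_int t < 0" by simp
    moreover have "min (int (Suc m)) (max 0 (t div 2)) = int m + 1"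
      and "min (int m) (max 0 (t div 2)) = int m" using True by auto
    ultimately show ?thesis using Suc.IH by (simp add: power2_eq_square algebra_simps)
  next
    case False
    then have "real_of_int t \<le> of_int (2 * int m + 1)" by presburger
    then have "0 \<le> 4 * real (2*m+1) - 4 * of_int t" by simp
    moreover have "min (int (Suc m)) (max 0 (t div 2)) = min (int m) (max 0 (t div 2))"
      using False by auto
    ultimately show ?thesis using Suc.IH by simp
  qed
qed

text \<open>The key identity: with enough terms, t^2 plus the hinge sum is (t - 2k)^2 with
  k = t div 2, i.e. the residue t mod 2.  The case t = -1 (all terms positive) is what
  the complement of the parity needs for the all-zero input.\<close>
lemma square_plus_hinge_sum:
  fixes t :: int
  assumes "-1 \<le> t" and "t div 2 \<le> int m"
  shows "(of_int t)\<^sup>2 + (\<Sum>i<m. min 0 (4 * real (2*i+1) - 4 * of_int t)) = of_int (t mod 2)"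
proof -
  define k where "k = max 0 (t div 2)"
  have "min (int m) k = k" using assms(2) by (simp add: k_def)
  then have "(\<Sum>i<m. min 0 (4 * real (2*i+1) - 4 * of_int t)) = 4 * (of_int k)\<^sup>2 - 4 * of_int k * of_int t"
    using hinge_sum[where m=m and t=t] unfolding k_def[symmetric] by simp
  then have "(of_int t)\<^sup>2 + (\<Sum>i<m. min 0 (4 * real (2*i+1) - 4 * of_int t))
        = real_of_int ((t - 2 * k)\<^sup>2)"
    by (simp add: power2_eq_square algebra_simps)
  also have "(t - 2 * k)\<^sup>2 = t mod 2"
  proof (cases "t = -1")
    case True then show ?thesis by (simp add: k_def)
  next
    case False
    then have "k = t div 2" using assms(1) by (simp add: k_def)
    then have "t - 2 * k = t mod 2" by (simp add: minus_div_mult_eq_mod[symmetric] mult.commute)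
    moreover have "t mod 2 = 0 \<or> t mod 2 = 1" by auto
    ultimately show ?thesis by auto
  qed
  finally show ?thesis .
qed

lemma parity_eq: "parity n x = (if odd (hamming_weight n x) then 1 else 0)"
  by (simp add: parity_def hamming_weight_def)

lemma parity_weight_formula:
  assumes "w \<le> n"
  shows "(if odd w then 1 else 0) =
           (real w)\<^sup>2 + (\<Sum>i<n div 2. min 0 (4 * real (2*i+1) - 4 * real w))"
proof -
  have "int w div 2 \<le> int (n div 2)" using assms by (simp add: zdiv_int div_le_mono)
  moreover have "int w mod 2 = (if odd w then 1 else 0)"
    by presburger
  ultimately show ?thesis using square_plus_hinge_sum[of "int w" "n div 2"] by simp
qed

text \<open>The complement of the parity of a weight w \<le> n, as the case t = w - 1 of the key
  identity; expanding (w-1)^2 gives the coefficients c = 1 and b = -2.\<close>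
lemma coparity_weight_formula:
  assumes "w \<le> n"
  shows "1 - (if odd w then 1 else 0) = 1 - 2 * real w + (real w)\<^sup>2
           + (\<Sum>i<(n - 1) div 2. min 0 (4 * real (2*i+2) - 4 * real w))"
proof -
  let ?t = "int w - 1"
  have "?t div 2 \<le> int ((n - 1) div 2)" using assms by (simp add: zdiv_int)
  then have hinge: "(of_int ?t)\<^sup>2 + (\<Sum>i<(n - 1) div 2. min 0 (4 * real (2*i+1) - 4 * of_int ?t))
             = real_of_int (?t mod 2)"
    by (intro square_plus_hinge_sum) simp_all
  have shift: "4 * real (2*i+1) - 4 * of_int ?t = 4 * real (2*i+2) - 4 * real w" for i
    by simp
  have residue: "real_of_int (?t mod 2) = (if odd w then 0 else 1)"
    using mod2_eq_if[of ?t] by presburger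
  have "of_int ?t = real w - 1" by simp
  with hinge[unfolded shift residue]
  have "(real w - 1)\<^sup>2 + (\<Sum>i<(n - 1) div 2. min 0 (4 * real (2*i+2) - 4 * real w))
        = (if odd w then 0 else 1)"
    by simp
  moreover have "(real w - 1)\<^sup>2 = 1 - 2 * real w + (real w)\<^sup>2" by (simp add: power2_diff)
  ultimately show ?thesis by (cases "odd w") simp_all
qed

text \<open>Theorem 6.\<close>
theorem theorem6:
  fixes n :: nat
  assumes "n \<ge> 1"
  shows "ylinear_quadratization n (n div 2) (parity n)
       \<and> ylinear_quadratization n ((n - 1) div 2) (\<lambda>x. 1 - parity n x)"
proof
  show "ylinear_quadratization n (n div 2) (parity n)"
    by (rule symmetric_ylinear_quadratization[where c=0 and b=0 and U="\<lambda>i. 4 * real (2*i+1)" and V="-4"])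
      (simp add: parity_eq parity_weight_formula[OF hamming_weight_le])
  show "ylinear_quadratization n ((n - 1) div 2) (\<lambda>x. 1 - parity n x)"
    by (rule symmetric_ylinear_quadratization[where c=1 and b="-2" and U="\<lambda>i. 4 * real (2*i+2)" and V="-4"])
      (simp add: parity_eq coparity_weight_formula[OF hamming_weight_le])
qed

end
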